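(* Let $\mathcal{H}=\mathcal{H}_1\otimes\mathcal{H}_2\otimes\mathcal{H}_3$ with $\dim\mathcal{H}_i=d_i$ and let $U\in SU(d_1d_2d_3)$ act on $\mathcal{H}$. Then $\epsilon_1(U)=\frac13[\epsilon_{12|3}(U)+\epsilon_{13|2}(U)+\epsilon_{23|1}(U)]$, and for each $ab|c\in\{12|3,13|2,23|1\}$, $$\epsilon_{ab|c}(U)=2\left[1-\Bigg(\prod_{i=1}^3\frac{d_i}{d_i+1}\Bigg)\sum_{x'|y'}\operatorname{tr}\big[(\operatorname{tr}_{abx'}|U\rangle\langle U|)^2\big]\right],$$ where the sum runs over all eight ordered bipartitions $x'|y'$ of $\{1',2',3'\}$, i.e. $x'|y'\in\{1'2'3'|\cdot,\ 1'2'|3',\ 1'3'|2',\ 2'3'|1',\ 1'|2'3',\ 2'|1'3',\ 3'|1'2',\ \cdot|1'2'3'\}$ (a dot denoting the empty set), and $\operatorname{tr}_{abx'}$ denotes the partial trace over the factors $\mathcal{H}_a,\mathcal{H}_b$ and $\mathcal{H}_{i'}$ for $i'\in x'$.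
   Context: Let $\mathcal{H}'=\mathcal{H}_{1'}\otimes\mathcal{H}_{2'}\otimes\mathcal{H}_{3'}$ be a copy of $\mathcal{H}$ with $\dim\mathcal{H}_{i'}=d_i$. Given orthonormal bases, the state associated with $U$ is $|U\rangle=\frac{1}{\sqrt{d_1d_2d_3}}\sum \langle j_1j_2j_3|U|j_{1'}j_{2'}j_{3'}\rangle\,|j_1j_2j_3\rangle\otimes|j_{1'}j_{2'}j_{3'}\rangle\in\mathcal{H}\otimes\mathcal{H}'$ (sum over all indices). For a pure state $|\psi\rangle\in\mathcal{H}$ and a bipartition $g|g'$ of $\{1,2,3\}$, $\tau_{g|g'}(|\psi\rangle)=2\big(1-\operatorname{tr}[(\operatorname{tr}_g|\psi\rangle\langle\psi|)^2]\big)$; the one-tangle is $\tau_1=\frac13(\tau_{12|3}+\tau_{13|2}+\tau_{23|1})$. $\epsilon_{ab|c}(U)$ (resp. $\epsilon_1(U)$) is the average of $\tau_{ab|c}(U|\psi_{\rm sep}\rangle)$ (resp. $\tau_1(U|\psi_{\rm sep}\rangle)$) over $|\psi_{\rm sep}\rangle=|\psi_1\rangle\otimes|\psi_2\rangle\otimes|\psi_3\rangle$, each $|\psi_i\rangle$ drawn independently from the unitarily invariant measure on pure states of $\mathcal{H}_i$. *)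

theory Defs
  imports "HOL-Analysis.Analysis" "HOL-Probability.Probability"
begin

text \<open>Hilbert spaces: H_i = complex^'i with orthonormal (standard) basis indexed by the
finite type 'i, so d_i = CARD('i).  The tripartite space H = H_1 (x) H_2 (x) H_3 has basis
indexed by 'a \<times> 'b \<times> 'c; operators on H are matrices complex^('a\<times>'b\<times>'c)^('a\<times>'b\<times>'c).\<close>

definition adjoint_mat :: "complex^'n^'m \<Rightarrow> complex^'m^'n" where
  "adjoint_mat A = (\<chi> i j. cnj (A $ j $ i))"

definition unitary_mat :: "complex^'n^'n \<Rightarrow> bool" where
  "unitary_mat A \<longleftrightarrow> A ** adjoint_mat A = mat 1 \<and> adjoint_mat A ** A = mat 1"

definition special_unitary :: "complex^'n^'n \<Rightarrow> bool" where
  "special_unitary A \<longleftrightarrow> unitary_mat A \<and> det A = 1"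

definition unitarily_invariant_state_measure :: "(complex^'n) measure \<Rightarrow> bool" where
  "unitarily_invariant_state_measure M \<longleftrightarrow>
     prob_space M \<and> sets M = sets borel \<and> emeasure M (sphere 0 1) = 1 \<and>
     (\<forall>V. unitary_mat V \<longrightarrow> distr M borel (\<lambda>\<psi>. V *v \<psi>) = M)"

fun sel3 :: "nat set \<Rightarrow> 'x \<times> 'y \<times> 'z \<Rightarrow> 'x \<times> 'y \<times> 'z \<Rightarrow> 'x \<times> 'y \<times> 'z" where
  "sel3 K (a, b, c) (a', b', c') =
     (if 1 \<in> K then a else a', if 2 \<in> K then b else b', if 3 \<in> K then c else c')"

text \<open>Six parties 1,2,3,1',2',3': K are the kept unprimed parties, K' the kept primed ones
(both as subsets of {1,2,3}).\<close>

fun sel6 :: "nat set \<Rightarrow> nat set \<Rightarrow> ('x \<times> 'y \<times> 'z) \<times> ('u \<times> 'v \<times> 'w)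
              \<Rightarrow> ('x \<times> 'y \<times> 'z) \<times> ('u \<times> 'v \<times> 'w) \<Rightarrow> ('x \<times> 'y \<times> 'z) \<times> ('u \<times> 'v \<times> 'w)" where
  "sel6 K K' (x, x') (y, y') = (sel3 K x y, sel3 K' x' y')"

text \<open>Reduced density matrix of the pure state psi (coefficients in the product basis) on the
kept parties, entries indexed by the kept part of basis indices (the traced coordinates being
fixed to a dummy value), obtained by partial trace over the remaining parties; and its purity
tr[rho^2].\<close>

definition reduced_dm :: "('i::finite \<Rightarrow> 'i \<Rightarrow> 'i) \<Rightarrow> ('i \<Rightarrow> complex) \<Rightarrow> 'i \<Rightarrow> 'i \<Rightarrow> complex" where
  "reduced_dm sel \<psi> k k' =
     (\<Sum>s\<in>range (\<lambda>i. sel undefined i). \<psi> (sel k s) * cnj (\<psi> (sel k' s)))"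

definition purity :: "('i::finite \<Rightarrow> 'i \<Rightarrow> 'i) \<Rightarrow> ('i \<Rightarrow> complex) \<Rightarrow> complex" where
  "purity sel \<psi> =
     (\<Sum>k\<in>range (\<lambda>i. sel i undefined). \<Sum>k'\<in>range (\<lambda>i. sel i undefined).
        reduced_dm sel \<psi> k k' * reduced_dm sel \<psi> k' k)"

text \<open>tau_{g|g'}(psi) = 2(1 - tr[(tr_g |psi><psi|)^2]) for g \<subseteq> {1,2,3}; the purity is real,
we take its real part.\<close>

definition tau :: "nat set \<Rightarrow> ('a::finite \<times> 'b::finite \<times> 'c::finite \<Rightarrow> complex) \<Rightarrow> real" where
  "tau g \<psi> = 2 * (1 - Re (purity (sel3 ({1,2,3} - g)) \<psi>))"

definition one_tangle :: "('a::finite \<times> 'b::finite \<times> 'c::finite \<Rightarrow> complex) \<Rightarrow> real" where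
  "one_tangle \<psi> = (tau {1,2} \<psi> + tau {1,3} \<psi> + tau {2,3} \<psi>) / 3"

definition apply_prod ::
  "complex^('a::finite \<times> 'b::finite \<times> 'c::finite)^('a \<times> 'b \<times> 'c)
     \<Rightarrow> complex^'a \<Rightarrow> complex^'b \<Rightarrow> complex^'c \<Rightarrow> ('a \<times> 'b \<times> 'c \<Rightarrow> complex)" where
  "apply_prod U \<psi>1 \<psi>2 \<psi>3 =
     (\<lambda>j. (U *v (\<chi> j. \<psi>1 $ fst j * \<psi>2 $ fst (snd j) * \<psi>3 $ snd (snd j))) $ j)"

definition ent_power ::
  "(complex^'a) measure \<Rightarrow> (complex^'b) measure \<Rightarrow> (complex^'c) measure \<Rightarrow> nat set
     \<Rightarrow> complex^('a::finite \<times> 'b::finite \<times> 'c::finite)^('a \<times> 'b \<times> 'c) \<Rightarrow> real" where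
  "ent_power M1 M2 M3 g U =
     (\<integral>(\<psi>1, \<psi>2, \<psi>3). tau g (apply_prod U \<psi>1 \<psi>2 \<psi>3) \<partial>(M1 \<Otimes>\<^sub>M (M2 \<Otimes>\<^sub>M M3)))"

definition ent_power1 ::
  "(complex^'a) measure \<Rightarrow> (complex^'b) measure \<Rightarrow> (complex^'c) measure
     \<Rightarrow> complex^('a::finite \<times> 'b::finite \<times> 'c::finite)^('a \<times> 'b \<times> 'c) \<Rightarrow> real" where
  "ent_power1 M1 M2 M3 U =
     (\<integral>(\<psi>1, \<psi>2, \<psi>3). one_tangle (apply_prod U \<psi>1 \<psi>2 \<psi>3) \<partial>(M1 \<Otimes>\<^sub>M (M2 \<Otimes>\<^sub>M M3)))"

text \<open>The state |U> in H (x) H' with coefficients <j1 j2 j3|U|j1' j2' j3'> / sqrt(d1 d2 d3).\<close>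

definition choi_state ::
  "complex^('a::finite \<times> 'b::finite \<times> 'c::finite)^('a \<times> 'b \<times> 'c)
     \<Rightarrow> ('a \<times> 'b \<times> 'c) \<times> ('a \<times> 'b \<times> 'c) \<Rightarrow> complex" where
  "choi_state U = (\<lambda>(j, j'). U $ j $ j' / complex_of_real (sqrt (real (CARD('a) * CARD('b) * CARD('c)))))"

end

(*
  Expanding the purity of U (psi1 (x) psi2 (x) psi3) in coordinates turns it into a quadratic form
  in the fourth-order tensor psi_i cnj(psi_j) psi_k cnj(psi_l) of the random product state.
  Invariance of each factor measure under diagonal phases, transpositions and one Hadamard rotation
  forces the average of psi_i cnj(psi_j) psi_k cnj(psi_l) over H_i to be
  (delta_ij delta_kl + delta_il delta_kj) / (d (d + 1)).  Multiplying out these pairings over the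
  three parties gives one term for each set x' of parties paired "directly", and the corresponding
  contraction of four copies of U is, up to the factor (d1 d2 d3)^2, the purity of the reduction of
  the Choi state |U> on which the primed parties in x' are traced out.  The statement about the
  one-tangle is linearity of the integral.
*)

theory Submission
  imports Defs
begin

section \<open>Probability measures concentrated on a compact set\<close>

definition prob_on_compact :: "'x::topological_space measure \<Rightarrow> 'x set \<Rightarrow> bool" where
  "prob_on_compact M S \<longleftrightarrow> prob_space M \<and> sets M = sets borel \<and> compact S \<and> (AE x in M. x \<in> S)"

lemma prob_on_compact_integrable:
  fixes f :: "'x::topological_space \<Rightarrow> 'b::{banach,second_countable_topology}"
  assumes M: "prob_on_compact M S" and f: "continuous_on UNIV f"
  shows "integrable M f"
proof -
  interpret prob_space M using M by (simp add: prob_on_compact_def)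
  have "compact (f ` S)"
    using M by (auto simp: prob_on_compact_def intro: compact_continuous_image continuous_on_subset[OF f])
  then obtain B where B: "\<And>x. x \<in> S \<Longrightarrow> norm (f x) \<le> B"
    by (meson compact_imp_bounded bounded_iff imageI)
  have "AE x in M. x \<in> S"
    using M by (simp add: prob_on_compact_def)
  then have "AE x in M. norm (f x) \<le> B"
    by eventually_elim (rule B)
  moreover have "sets M = sets borel"
    using M by (simp add: prob_on_compact_def)
  then have "f \<in> borel_measurable M"
    using borel_measurable_continuous_onI[OF f] measurable_cong_sets[of M borel] by blast
  ultimately show ?thesis
    by (intro integrable_const_bound)
qed

lemma prob_on_compact_pair:
  fixes M :: "'x::{second_countable_topology,t2_space} measure" and N :: "'y::{second_countable_topology,t2_space} measure"
  assumes M: "prob_on_compact M S" and N: "prob_on_compact N T"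
  shows "prob_on_compact (M \<Otimes>\<^sub>M N) (S \<times> T)"
proof -
  have pM: "prob_space M" and pN: "prob_space N" using M N by (auto simp: prob_on_compact_def)
  interpret pair_sigma_finite M N
    by (intro pair_sigma_finite.intro prob_space_imp_sigma_finite pM pN)
  have "sets (M \<Otimes>\<^sub>M N) = sets (borel \<Otimes>\<^sub>M borel)"
    using M N by (intro sets_pair_measure_cong) (auto simp: prob_on_compact_def)
  then have sets: "sets (M \<Otimes>\<^sub>M N) = sets borel"
    by (simp only: borel_prod)
  have compact: "compact (S \<times> T)" using M N by (simp add: prob_on_compact_def compact_Times)
  then have "{x \<in> space (M \<Otimes>\<^sub>M N). x \<in> S \<times> T} \<in> sets (M \<Otimes>\<^sub>M N)"
    using sets sets_eq_imp_space_eq[OF sets] by (simp add: borel_closed compact_imp_closed)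
  moreover have "AE x in M. AE y in N. (x, y) \<in> S \<times> T"
  proof -
    have "AE x in M. x \<in> S" and "AE y in N. y \<in> T"
      using M N by (simp_all add: prob_on_compact_def)
    then show ?thesis
      by (auto elim!: eventually_mono)
  qed
  ultimately have "AE z in M \<Otimes>\<^sub>M N. z \<in> S \<times> T"
    by (rule AE_pair_measure)
  then show ?thesis
    using prob_space_pair[OF pM pN] sets compact by (simp add: prob_on_compact_def)
qed

lemma prob_on_compact_integral_mult:
  fixes M :: "'x::{second_countable_topology,t2_space} measure" and N :: "'y::{second_countable_topology,t2_space} measure"
    and f :: "'x \<Rightarrow> 'b::{real_normed_field,banach,second_countable_topology}" and g :: "'y \<Rightarrow> 'b"
  assumes M: "prob_on_compact M S" and N: "prob_on_compact N T"
    and f: "continuous_on UNIV f" and g: "continuous_on UNIV g"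
  shows "(\<integral>z. f (fst z) * g (snd z) \<partial>(M \<Otimes>\<^sub>M N)) = integral\<^sup>L M f * integral\<^sup>L N g"
proof -
  interpret pair_sigma_finite M N
    using M N by (intro pair_sigma_finite.intro prob_space_imp_sigma_finite) (auto simp: prob_on_compact_def)
  have "continuous_on UNIV (\<lambda>z. f (fst z) * g (snd z))"
    by (intro continuous_intros continuous_on_compose2[OF f] continuous_on_compose2[OF g]) auto
  then have "integrable (M \<Otimes>\<^sub>M N) (\<lambda>z. f (fst z) * g (snd z))"
    by (rule prob_on_compact_integrable[OF prob_on_compact_pair[OF M N]])
  from integral_fst'[OF this] show ?thesis
    by simp
qed

lemma prob_on_compact_sphere:
  assumes "unitarily_invariant_state_measure M"
  shows "prob_on_compact M (sphere 0 1)"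
proof -
  interpret prob_space M
    using assms by (simp add: unitarily_invariant_state_measure_def)
  have "prob (sphere 0 1) = 1"
    using assms by (simp add: unitarily_invariant_state_measure_def measure_def)
  then have "AE x in M. x \<in> sphere 0 1"
    by (rule AE_prob_1)
  then show ?thesis
    using assms by (simp add: unitarily_invariant_state_measure_def prob_on_compact_def)
qed

section \<open>Purity in coordinates\<close>

definition quartic :: "('j \<Rightarrow> complex) \<Rightarrow> 'j \<Rightarrow> 'j \<Rightarrow> 'j \<Rightarrow> 'j \<Rightarrow> complex" where
  "quartic v i j k l = v i * cnj (v j) * v k * cnj (v l)"

lemma quartic_linear_image:
  fixes A :: "'i \<Rightarrow> 'j::finite \<Rightarrow> complex"
  shows "quartic (\<lambda>x. \<Sum>m\<in>UNIV. A x m * v m) x1 x2 x3 x4 =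
    (\<Sum>m1\<in>UNIV. \<Sum>m3\<in>UNIV. \<Sum>m2\<in>UNIV. \<Sum>m4\<in>UNIV.
       A x1 m1 * cnj (A x2 m2) * A x3 m3 * cnj (A x4 m4) * quartic v m1 m2 m3 m4)"
proof -
  have "quartic (\<lambda>x. \<Sum>m\<in>UNIV. A x m * v m) x1 x2 x3 x4 =
     (\<Sum>m4\<in>UNIV. cnj (A x4 m4 * v m4)) * ((\<Sum>m2\<in>UNIV. cnj (A x2 m2 * v m2)) *
     ((\<Sum>m3\<in>UNIV. A x3 m3 * v m3) * (\<Sum>m1\<in>UNIV. A x1 m1 * v m1)))"
    by (simp add: quartic_def cnj_sum mult_ac)
  also have "\<dots> = (\<Sum>m1\<in>UNIV. \<Sum>m3\<in>UNIV. \<Sum>m2\<in>UNIV. \<Sum>m4\<in>UNIV.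
       cnj (A x4 m4 * v m4) * (cnj (A x2 m2 * v m2) * (A x3 m3 * v m3 * (A x1 m1 * v m1))))"
    by (simp only: sum_distrib_left sum_distrib_right)
  finally show ?thesis
    by (simp add: quartic_def mult_ac)
qed

text \<open>The properties of \<open>sel3\<close> and \<open>sel6\<close> that make \<open>reduced_dm\<close> a partial trace.\<close>

locale coordinate_selection =
  fixes sel :: "'i::finite \<Rightarrow> 'i \<Rightarrow> 'i"
  assumes sel_left: "\<And>a b c. sel (sel a b) c = sel a c"
    and sel_right: "\<And>a b c. sel a (sel b c) = sel a c"
    and sel_same: "\<And>a. sel a a = a"
begin

lemma sum_kept_traced:
  "(\<Sum>k\<in>range (\<lambda>i. sel i undefined). \<Sum>s\<in>range (\<lambda>i. sel undefined i). G k s)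
   = (\<Sum>x\<in>UNIV. G (sel x undefined) (sel undefined x))"
proof -
  have "(\<Sum>x\<in>UNIV. G (sel x undefined) (sel undefined x))
      = (\<Sum>(k, s)\<in>range (\<lambda>i. sel i undefined) \<times> range (\<lambda>i. sel undefined i). G k s)"
    by (rule sum.reindex_bij_witness[where j = "\<lambda>x. (sel x undefined, sel undefined x)"
          and i = "\<lambda>(k, s). sel k s"]) (auto simp: sel_left sel_right sel_same)
  then show ?thesis by (simp add: sum.cartesian_product)
qed

lemma purity_eq_sum:
  "purity sel \<psi> = (\<Sum>x\<in>UNIV. \<Sum>y\<in>UNIV. quartic \<psi> x (sel y x) y (sel x y))"
proof -
  have "purity sel \<psi> = (\<Sum>k\<in>range (\<lambda>i. sel i undefined). \<Sum>s\<in>range (\<lambda>i. sel undefined i).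
      \<Sum>k'\<in>range (\<lambda>i. sel i undefined). \<Sum>s'\<in>range (\<lambda>i. sel undefined i).
        \<psi> (sel k s) * cnj (\<psi> (sel k' s)) * (\<psi> (sel k' s') * cnj (\<psi> (sel k s'))))"
    unfolding purity_def reduced_dm_def sum_product by (intro sum.cong refl sum.swap)
  then show ?thesis
    by (simp add: sum_kept_traced sel_left sel_right sel_same quartic_def mult.assoc)
qed

end

lemma coordinate_selection_sel3: "coordinate_selection (sel3 K :: 'x::finite \<times> 'y::finite \<times> 'z::finite \<Rightarrow> _)"
  by unfold_locales auto

lemma coordinate_selection_sel6:
  "coordinate_selection
     (sel6 K K' :: ('x::finite \<times> 'y::finite \<times> 'z::finite) \<times> ('u::finite \<times> 'v::finite \<times> 'w::finite) \<Rightarrow> _)"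
  by unfold_locales auto

lemma purity_divide_of_real:
  "purity sel (\<lambda>z. \<psi> z / of_real r) = purity sel \<psi> / of_real (r ^ 4)"
proof -
  have "reduced_dm sel (\<lambda>z. \<psi> z / of_real r) k k' = reduced_dm sel \<psi> k k' / of_real (r\<^sup>2)" for k k'
    by (simp add: reduced_dm_def sum_divide_distrib power2_eq_square)
  then show ?thesis
    by (simp add: purity_def sum_divide_distrib times_divide_times_eq flip: of_real_mult power_add)
qed

lemma sum_UNIV_pair:
  "(\<Sum>z\<in>(UNIV :: ('p::finite \<times> 'q::finite) set). f z) = (\<Sum>x\<in>UNIV. \<Sum>y\<in>UNIV. f (x, y))"
  by (simp add: sum.cartesian_product)

lemma purity_sel6_matrix:
  fixes U :: "complex^('a::finite \<times> 'b::finite \<times> 'c::finite)^('a \<times> 'b \<times> 'c)"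
  shows "purity (sel6 K K') (\<lambda>(x, m). U $ x $ m) =
    (\<Sum>x\<in>UNIV. \<Sum>y\<in>UNIV. \<Sum>m1\<in>UNIV. \<Sum>m3\<in>UNIV.
       U $ x $ m1 * cnj (U $ sel3 K y x $ sel3 K' m3 m1) * U $ y $ m3 * cnj (U $ sel3 K x y $ sel3 K' m1 m3))"
proof -
  interpret coordinate_selection "sel6 K K' :: ('a \<times> 'b \<times> 'c) \<times> ('a \<times> 'b \<times> 'c) \<Rightarrow> _"
    by (rule coordinate_selection_sel6)
  have "purity (sel6 K K') (\<lambda>(x, m). U $ x $ m) =
    (\<Sum>x\<in>UNIV. \<Sum>m1\<in>UNIV. \<Sum>y\<in>UNIV. \<Sum>m3\<in>UNIV.
       U $ x $ m1 * cnj (U $ sel3 K y x $ sel3 K' m3 m1) * U $ y $ m3 * cnj (U $ sel3 K x y $ sel3 K' m1 m3))"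
    unfolding purity_eq_sum sum_UNIV_pair[where 'p = "'a \<times> 'b \<times> 'c" and 'q = "'a \<times> 'b \<times> 'c"]
    by (simp add: quartic_def)
  also have "\<dots> = (\<Sum>x\<in>UNIV. \<Sum>y\<in>UNIV. \<Sum>m1\<in>UNIV. \<Sum>m3\<in>UNIV.
       U $ x $ m1 * cnj (U $ sel3 K y x $ sel3 K' m3 m1) * U $ y $ m3 * cnj (U $ sel3 K x y $ sel3 K' m1 m3))"
    by (rule sum.cong[OF refl], rule sum.swap)
  finally show ?thesis .
qed

lemma purity_choi_state:
  fixes U :: "complex^('a::finite \<times> 'b::finite \<times> 'c::finite)^('a \<times> 'b \<times> 'c)"
  shows "purity sel (\<lambda>(x, m). U $ x $ m) =
    of_nat ((CARD('a) * CARD('b) * CARD('c))\<^sup>2) * purity sel (choi_state U)"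
proof -
  define D where "D = CARD('a) * CARD('b) * CARD('c)"
  have "D > 0"
    by (simp add: D_def)
  have "choi_state U = (\<lambda>z. (\<lambda>(x, m). U $ x $ m) z / of_real (sqrt (real D)))"
    by (auto simp: choi_state_def D_def)
  then have "purity sel (choi_state U) = purity sel (\<lambda>(x, m). U $ x $ m) / of_real (sqrt (real D) ^ 4)"
    by (simp add: purity_divide_of_real)
  also have "sqrt (real D) ^ 4 = (sqrt (real D) ^ 2) ^ 2"
    using power_mult[of "sqrt (real D)" 2 2] by simp
  also have "\<dots> = real (D\<^sup>2)"
    by simp
  finally show ?thesis
    using \<open>D > 0\<close> by (simp add: D_def)
qed

section \<open>Some unitary matrices\<close>

lemma unitary_matI_self_adjoint:
  assumes "adjoint_mat A = A" and "A ** A = mat 1"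
  shows "unitary_mat A"
  using assms by (simp add: unitary_mat_def)

definition diag_mat :: "('n::finite \<Rightarrow> complex) \<Rightarrow> complex^'n^'n" where
  "diag_mat w = (\<chi> i j. if i = j then w i else 0)"

lemma diag_mat_mult_vec: "(diag_mat w *v \<psi>) $ i = w i * \<psi> $ i"
  by (simp add: diag_mat_def matrix_vector_mult_def if_distrib[where f = "\<lambda>x. x * _"] cong: if_cong)

lemma unitary_diag_mat:
  assumes "\<And>i. w i * cnj (w i) = 1"
  shows "unitary_mat (diag_mat w)"
  using assms
  by (simp add: unitary_mat_def adjoint_mat_def diag_mat_def matrix_matrix_mult_def mat_def
      vec_eq_iff if_distrib[where f = "\<lambda>x. x * _"] if_distrib[where f = "\<lambda>x. _ * x"]  mult.commute cong: if_cong)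

definition permutation_mat :: "('n::finite \<Rightarrow> 'n) \<Rightarrow> complex^'n^'n" where
  "permutation_mat p = (\<chi> i j. if j = p i then 1 else 0)"

lemma permutation_mat_mult_vec: "(permutation_mat p *v \<psi>) $ i = \<psi> $ p i"
  by (simp add: permutation_mat_def matrix_vector_mult_def if_distrib[where f = "\<lambda>x. x * _"] cong: if_cong)

lemma unitary_permutation_mat:
  assumes "\<And>k. p (p k) = k"
  shows "unitary_mat (permutation_mat p)"
proof (rule unitary_matI_self_adjoint)
  have "(j = p i) = (i = p j)" for i j
    using assms by metis
  then show "adjoint_mat (permutation_mat p) = permutation_mat p"
    by (simp add: adjoint_mat_def permutation_mat_def vec_eq_iff)
  show "permutation_mat p ** permutation_mat p = mat 1"
    using assms by (auto simp: permutation_mat_def matrix_matrix_mult_def mat_def vec_eq_iff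
      if_distrib[where f = "\<lambda>x. x * _"] cong: if_cong)
qed

definition hadamard_mat :: "'n::finite \<Rightarrow> 'n \<Rightarrow> complex^'n^'n" where
  "hadamard_mat a b = (\<chi> i j.
     if i \<in> {a, b} \<and> j \<in> {a, b} then (if i = b \<and> j = b then -1 else 1) / of_real (sqrt 2)
     else if i = j then 1 else 0)"

lemma sum_UNIV_pick_two:
  fixes f :: "'n::finite \<Rightarrow> 'b::comm_monoid_add"
  assumes "a \<noteq> b"
  shows "(\<Sum>k\<in>UNIV. f k) = f a + f b + (\<Sum>k\<in>UNIV - {a, b}. f k)"
  using assms sum.subset_diff[of "{a, b}" UNIV f] by (simp add: add.commute)

lemma of_real_sqrt2_squared: "complex_of_real (sqrt 2) * complex_of_real (sqrt 2) = 2"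
  by (simp flip: of_real_mult)

lemma unitary_hadamard_mat:
  assumes "a \<noteq> b"
  shows "unitary_mat (hadamard_mat a b)"
proof (rule unitary_matI_self_adjoint)
  show "adjoint_mat (hadamard_mat a b) = hadamard_mat a b"
    by (auto simp: adjoint_mat_def hadamard_mat_def vec_eq_iff)
  have "(\<Sum>k\<in>UNIV - {a, b}. hadamard_mat a b $ i $ k * hadamard_mat a b $ k $ j)
      = (if i \<notin> {a, b} \<and> i = j then 1 else 0)" for i j
    by (auto simp: hadamard_mat_def if_distrib[where f = "\<lambda>x. x * _"] cong: if_cong)
  then show "hadamard_mat a b ** hadamard_mat a b = mat 1"
    using assms
    by (auto simp: matrix_matrix_mult_def mat_def vec_eq_iff sum_UNIV_pick_two[OF assms] hadamard_mat_def
        field_simps of_real_sqrt2_squared)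
qed

lemma hadamard_mat_mult_vec:
  assumes "a \<noteq> b"
  shows "(hadamard_mat a b *v \<psi>) $ a = (\<psi> $ a + \<psi> $ b) / of_real (sqrt 2)"
proof -
  have "(\<Sum>k\<in>UNIV - {a, b}. hadamard_mat a b $ a $ k * \<psi> $ k) = 0"
    by (intro sum.neutral) (auto simp: hadamard_mat_def)
  then show ?thesis
    using assms by (simp add: matrix_vector_mult_def sum_UNIV_pick_two[OF assms] hadamard_mat_def add_divide_distrib)
qed

section \<open>Fourth moments of a unitarily invariant random state\<close>

definition fourth_moment :: "(complex^'n) measure \<Rightarrow> 'n \<Rightarrow> 'n \<Rightarrow> 'n \<Rightarrow> 'n \<Rightarrow> complex" where
  "fourth_moment M i j k l = (\<integral>\<psi>. quartic (vec_nth \<psi>) i j k l \<partial>M)"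

definition pairing :: "'n \<Rightarrow> 'n \<Rightarrow> 'n \<Rightarrow> 'n \<Rightarrow> complex" where
  "pairing i j k l = of_bool (i = j \<and> k = l) + of_bool (i = l \<and> k = j)"

lemma continuous_quartic: "continuous_on UNIV (\<lambda>\<psi>::complex^'n. quartic (vec_nth \<psi>) i j k l)"
  unfolding quartic_def by (intro continuous_intros)

lemma sum_mult_cnj_eq_norm_squared:
  "(\<Sum>i\<in>UNIV. x $ i * cnj (x $ i)) = complex_of_real ((norm x)\<^sup>2)"
proof -
  have "(\<Sum>i\<in>UNIV. x $ i * cnj (x $ i)) = complex_of_real (\<Sum>i\<in>UNIV. (norm (x $ i))\<^sup>2)"
    by (simp add: complex_norm_square del: of_real_power)
  also have "(\<Sum>i\<in>UNIV. (norm (x $ i))\<^sup>2) = (norm x)\<^sup>2"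
    by (simp add: norm_vec_def L2_set_def sum_nonneg)
  finally show ?thesis .
qed

context
  fixes M :: "(complex^'n::finite) measure"
  assumes M: "unitarily_invariant_state_measure M"
begin

lemma integrable_quartic: "integrable M (\<lambda>\<psi>. quartic (vec_nth \<psi>) i j k l)"
  by (rule prob_on_compact_integrable[OF prob_on_compact_sphere[OF M] continuous_quartic])

lemma fourth_moment_unitary_invariant:
  assumes "unitary_mat V"
  shows "fourth_moment M i j k l = (\<integral>\<psi>. quartic (vec_nth (V *v \<psi>)) i j k l \<partial>M)"
proof -
  have "sets M = sets borel"
    using M by (simp add: unitarily_invariant_state_measure_def)
  have "(\<lambda>\<psi>. V *v \<psi>) \<in> M \<rightarrow>\<^sub>M borel"
    unfolding measurable_cong_sets[OF \<open>sets M = sets borel\<close> refl]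
    by (intro borel_measurable_continuous_onI matrix_vector_mult_linear_continuous_on)
  from integral_distr[OF this borel_measurable_continuous_onI[OF continuous_quartic]]
  have "(\<integral>\<psi>. quartic (vec_nth \<psi>) i j k l \<partial>distr M borel (\<lambda>\<psi>. V *v \<psi>))
      = (\<integral>\<psi>. quartic (vec_nth (V *v \<psi>)) i j k l \<partial>M)" .
  moreover have "distr M borel (\<lambda>\<psi>. V *v \<psi>) = M"
    using M assms by (simp add: unitarily_invariant_state_measure_def)
  ultimately show ?thesis
    by (simp add: fourth_moment_def)
qed

lemma fourth_moment_phase_invariant:
  assumes "\<And>i. w i * cnj (w i) = 1"
  shows "fourth_moment M i j k l = quartic w i j k l * fourth_moment M i j k l"
proof -
  have "fourth_moment M i j k l = (\<integral>\<psi>. quartic (vec_nth (diag_mat w *v \<psi>)) i j k l \<partial>M)"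
    using assms by (intro fourth_moment_unitary_invariant unitary_diag_mat)
  also have "\<dots> = (\<integral>\<psi>. quartic w i j k l * quartic (vec_nth \<psi>) i j k l \<partial>M)"
    by (simp add: diag_mat_mult_vec quartic_def mult_ac)
  finally show ?thesis
    by (simp add: fourth_moment_def)
qed

lemma fourth_moment_unpaired:
  assumes "\<not> (i = j \<and> k = l \<or> i = l \<and> k = j)"
  shows "fourth_moment M i j k l = 0"
proof -
  \<comment> \<open>The phase \<open>\<i>\<close> on coordinate \<open>m\<close> multiplies the moment by \<open>\<i>\<close> to the number of
    occurrences of \<open>m\<close> among \<open>i, k\<close> minus those among \<open>j, l\<close>.\<close>
  define w where "w m = (\<lambda>x. if x = m then \<i> else 1)" for m :: 'n
  have "\<exists>m. quartic (w m) i j k l \<noteq> 1"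
  proof (rule ccontr)
    assume "\<nexists>m. quartic (w m) i j k l \<noteq> 1"
    then have "\<And>m. quartic (w m) i j k l = 1" by blast
    from this[of i] this[of j] this[of k] this[of l] assms show False
      by (auto simp: quartic_def w_def split: if_splits)
  qed
  then obtain m where "quartic (w m) i j k l \<noteq> 1" ..
  moreover have "fourth_moment M i j k l = quartic (w m) i j k l * fourth_moment M i j k l"
    by (rule fourth_moment_phase_invariant) (simp add: w_def)
  ultimately show ?thesis
    by (metis mult_cancel_right2)
qed

lemma fourth_moment_transpose:
  fixes a b :: 'n
  defines "t \<equiv> Transposition.transpose a b"
  shows "fourth_moment M i j k l = fourth_moment M (t i) (t j) (t k) (t l)"
proof -
  have "fourth_moment M i j k l = (\<integral>\<psi>. quartic (vec_nth (permutation_mat t *v \<psi>)) i j k l \<partial>M)"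
    unfolding t_def by (intro fourth_moment_unitary_invariant unitary_permutation_mat transpose_involutory)
  then show ?thesis
    unfolding permutation_mat_mult_vec by (simp only: quartic_def fourth_moment_def)
qed

lemma fourth_moment_swap_conj: "fourth_moment M i j k l = fourth_moment M i l k j"
  by (simp add: fourth_moment_def quartic_def mult_ac)

lemma fourth_moment_diag: "fourth_moment M i i i i = fourth_moment M a a a a"
  using fourth_moment_transpose[of i i i i i a] by simp

lemma fourth_moment_offdiag:
  assumes "i \<noteq> k" and "a \<noteq> b"
  shows "fourth_moment M i i k k = fourth_moment M a a b b"
proof -
  define k' where "k' = Transposition.transpose i a k"
  have "k' \<noteq> a"
    using assms by (auto simp: k'_def transpose_eq_iff)
  have "fourth_moment M i i k k = fourth_moment M a a k' k'"
    using fourth_moment_transpose[of i i k k i a] by (simp add: k'_def)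
  also have "\<dots> = fourth_moment M a a b b"
    using fourth_moment_transpose[of a a k' k' k' b] \<open>k' \<noteq> a\<close> assms by simp
  finally show ?thesis .
qed

lemma fourth_moment_cases:
  assumes "a \<noteq> b"
  shows "fourth_moment M i j k l =
    (if i = j \<and> k = l \<and> i = k then fourth_moment M a a a a
     else if i = j \<and> k = l \<or> i = l \<and> k = j then fourth_moment M a a b b else 0)"
proof -
  consider "i = j \<and> k = l \<and> i = k" | "i = j \<and> k = l \<and> i \<noteq> k" | "i = l \<and> k = j \<and> i \<noteq> k"
    | "\<not> (i = j \<and> k = l \<or> i = l \<and> k = j)"
    by blast
  then show ?thesis
  proof cases
    case 1
    then have "j = i" "k = i" "l = i" by auto
    then show ?thesis
      by (simp add: fourth_moment_diag[of i a])
  next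
    case 2
    then have "j = i" "l = k" "i \<noteq> k" by auto
    then show ?thesis
      by (simp add: fourth_moment_offdiag[OF \<open>i \<noteq> k\<close> assms])
  next
    case 3
    then have "j = k" "l = i" "i \<noteq> k" by auto
    then show ?thesis
      by (simp add: fourth_moment_swap_conj[of i k k i] fourth_moment_offdiag[OF \<open>i \<noteq> k\<close> assms])
  next
    case 4
    then show ?thesis
      by (auto simp: fourth_moment_unpaired)
  qed
qed

lemma fourth_moment_hadamard:
  assumes "a \<noteq> b"
  shows "fourth_moment M a a a a = 2 * fourth_moment M a a b b"
proof -
  define A B where "A = fourth_moment M a a a a" and "B = fourth_moment M a a b b"
  have cases: "fourth_moment M i j k l =
      (if i = j \<and> k = l \<and> i = k then A else if i = j \<and> k = l \<or> i = l \<and> k = j then B else 0)"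
    for i j k l
    unfolding A_def B_def by (rule fourth_moment_cases[OF assms])
  have "A = (\<integral>\<psi>. quartic (vec_nth (hadamard_mat a b *v \<psi>)) a a a a \<partial>M)"
    unfolding A_def using assms by (intro fourth_moment_unitary_invariant unitary_hadamard_mat)
  also have "\<dots> = (\<integral>\<psi>. (\<Sum>i\<in>{a, b}. \<Sum>j\<in>{a, b}. \<Sum>k\<in>{a, b}. \<Sum>l\<in>{a, b}.
      quartic (vec_nth \<psi>) i j k l) / 4 \<partial>M)"
    using assms
    by (intro Bochner_Integration.integral_cong refl)
      (simp add: hadamard_mat_mult_vec quartic_def field_simps of_real_sqrt2_squared)
  also have "\<dots> = (\<Sum>i\<in>{a, b}. \<Sum>j\<in>{a, b}. \<Sum>k\<in>{a, b}. \<Sum>l\<in>{a, b}.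
      fourth_moment M i j k l) / 4"
    by (simp add: fourth_moment_def integrable_quartic del: sum.insert)
  also have "\<dots> = (A + 2 * B) / 2"
    using assms by (simp add: cases eq_commute[of b a])
  finally show ?thesis
    by (simp add: A_def B_def)
qed

lemma sum_fourth_moment_diag: "(\<Sum>i\<in>UNIV. \<Sum>j\<in>UNIV. fourth_moment M i i j j) = 1"
proof -
  interpret prob_space M
    using M by (simp add: unitarily_invariant_state_measure_def)
  have "(\<Sum>i\<in>UNIV. \<Sum>j\<in>UNIV. fourth_moment M i i j j)
      = (\<integral>\<psi>. (\<Sum>i\<in>UNIV. \<Sum>j\<in>UNIV. quartic (vec_nth \<psi>) i i j j) \<partial>M)"
    by (simp add: fourth_moment_def integrable_quartic integrable_sum Bochner_Integration.integral_sum)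
  also have "\<dots> = (\<integral>\<psi>. (\<Sum>i\<in>UNIV. \<psi> $ i * cnj (\<psi> $ i)) * (\<Sum>j\<in>UNIV. \<psi> $ j * cnj (\<psi> $ j)) \<partial>M)"
    by (simp add: quartic_def sum_product mult_ac)
  also have "\<dots> = (\<integral>\<psi>. 1 \<partial>M)"
  proof (rule integral_cong_AE)
    have "AE \<psi> in M. \<psi> \<in> sphere 0 1"
      using prob_on_compact_sphere[OF M] by (simp add: prob_on_compact_def)
    then show "AE \<psi> in M. (\<Sum>i\<in>UNIV. \<psi> $ i * cnj (\<psi> $ i)) * (\<Sum>j\<in>UNIV. \<psi> $ j * cnj (\<psi> $ j)) = 1"
    proof eventually_elim
      case (elim \<psi>)
      then show ?case
        by (simp add: sum_mult_cnj_eq_norm_squared)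
    qed
  qed (intro borel_measurable_integrable prob_on_compact_integrable[OF prob_on_compact_sphere[OF M]]
      continuous_intros measurable_const)+
  finally show ?thesis
    by (simp add: prob_space)
qed

lemma fourth_moment_proportional_pairing:
  obtains c where "\<And>i j k l. fourth_moment M i j k l = pairing i j k l * c"
proof (cases "\<exists>a b :: 'n. a \<noteq> b")
  case True
  then obtain a b :: 'n where "a \<noteq> b" by blast
  show ?thesis
  proof
    show "fourth_moment M i j k l = pairing i j k l * fourth_moment M a a b b" for i j k l
      using fourth_moment_cases[OF \<open>a \<noteq> b\<close>, of i j k l] fourth_moment_hadamard[OF \<open>a \<noteq> b\<close>]
      by (cases "i = j"; cases "k = l"; cases "i = l"; cases "k = j") (simp_all add: pairing_def)
  qed
next
  case False
  then have singleton: "x = y" for x y :: 'n by blast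
  show ?thesis
  proof
    fix i j k l
    define u :: 'n where "u = undefined"
    have "i = u" "j = u" "k = u" "l = u"
      by (rule singleton)+
    then show "fourth_moment M i j k l = pairing i j k l * (fourth_moment M u u u u / 2)"
      by (simp add: pairing_def)
  qed
qed

theorem fourth_moment_eq:
  "fourth_moment M i j k l = pairing i j k l / (of_nat CARD('n) * (of_nat CARD('n) + 1))"
proof -
  obtain c where c: "\<And>i j k l. fourth_moment M i j k l = pairing i j k l * c"
    using fourth_moment_proportional_pairing by blast
  have "of_nat CARD('n) * (of_nat CARD('n) + 1) * c
      = (\<Sum>i\<in>UNIV. \<Sum>j::'n\<in>UNIV. c + of_bool (i = j) * c)"
    by (simp add: sum.distrib algebra_simps)
  also have "\<dots> = (\<Sum>i\<in>UNIV. \<Sum>j\<in>UNIV. fourth_moment M i i j j)"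
    by (intro sum.cong refl, rename_tac i j, case_tac "i = j") (simp_all add: c pairing_def)
  also have "\<dots> = 1"
    by (rule sum_fourth_moment_diag)
  finally have "c = 1 / (of_nat CARD('n) * (of_nat CARD('n) + 1))"
    by (auto simp: eq_divide_eq mult.commute)
  then show ?thesis
    by (simp add: c)
qed

end

section \<open>Averages over random product states\<close>

lemma sum_of_bool_pairs_collapse:
  fixes G :: "'m::finite \<Rightarrow> 'n::finite \<Rightarrow> 'r::comm_ring_1"
  assumes "finite B"
  shows "(\<Sum>m2\<in>UNIV. \<Sum>m4\<in>UNIV. G m2 m4 * (\<Sum>b\<in>B. of_bool (m2 = X b \<and> m4 = Y b)))
    = (\<Sum>b\<in>B. G (X b) (Y b))"
proof -
  have "(\<Sum>m2\<in>UNIV. \<Sum>m4\<in>UNIV. G m2 m4 * (\<Sum>b\<in>B. of_bool (m2 = X b \<and> m4 = Y b)))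
      = (\<Sum>b\<in>B. \<Sum>m2\<in>UNIV. \<Sum>m4\<in>UNIV. G m2 m4 * of_bool (m2 = X b) * of_bool (m4 = Y b))"
    by (simp add: sum_distrib_left of_bool_conj mult.assoc sum.swap[of _ B])
  also have "\<dots> = (\<Sum>b\<in>B. G (X b) (Y b))"
    by (simp add: sum_distrib_right[symmetric] sum.delta)
  finally show ?thesis .
qed

lemma pairing_product:
  "pairing a1 a2 a3 a4 * pairing b1 b2 b3 b4 * pairing c1 c2 c3 c4 =
    (\<Sum>x'\<in>Pow {1,2,3}.
       of_bool ((a2, b2, c2) = sel3 ({1,2,3} - x') (a3, b3, c3) (a1, b1, c1) \<and>
                (a4, b4, c4) = sel3 ({1,2,3} - x') (a1, b1, c1) (a3, b3, c3)))"
proof -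
  define direct :: "nat \<Rightarrow> bool" where
    "direct t = (if t = 1 then a1 = a2 \<and> a3 = a4 else if t = 2 then b1 = b2 \<and> b3 = b4 else c1 = c2 \<and> c3 = c4)"
    for t
  define crossed :: "nat \<Rightarrow> bool" where
    "crossed t = (if t = 1 then a1 = a4 \<and> a3 = a2 else if t = 2 then b1 = b4 \<and> b3 = b2 else c1 = c4 \<and> c3 = c2)"
    for t
  have "pairing a1 a2 a3 a4 * pairing b1 b2 b3 b4 * pairing c1 c2 c3 c4 =
      (\<Prod>t\<in>{1,2,3::nat}. of_bool (direct t) + of_bool (crossed t))"
    by (simp add: pairing_def direct_def crossed_def mult.assoc)
  also have "\<dots> = (\<Sum>x'\<in>Pow {1,2,3}. (\<Prod>t\<in>x'. of_bool (direct t)) * (\<Prod>t\<in>{1,2,3} - x'. of_bool (crossed t)))"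
    by (rule prod_add) simp
  also have "\<dots> = (\<Sum>x'\<in>Pow {1,2,3}.
       of_bool ((a2, b2, c2) = sel3 ({1,2,3} - x') (a3, b3, c3) (a1, b1, c1) \<and>
                (a4, b4, c4) = sel3 ({1,2,3} - x') (a1, b1, c1) (a3, b3, c3)))"
  proof (rule sum.cong[OF refl])
    fix x' :: "nat set"
    assume "x' \<in> Pow {1,2,3}"
    then have "{1,2,3} \<inter> {t. t \<in> x'} = x'" and "{1,2,3} \<inter> - {t. t \<in> x'} = {1,2,3} - x'"
      by auto
    then have "(\<Prod>t\<in>x'. of_bool (direct t)) * (\<Prod>t\<in>{1,2,3} - x'. of_bool (crossed t))
        = (\<Prod>t\<in>{1,2,3::nat}. if t \<in> x' then of_bool (direct t) else of_bool (crossed t) :: complex)"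
      by (simp add: prod.If_cases)
    also have "\<dots> = of_bool ((if 1 \<in> x' then direct 1 else crossed 1) \<and> (if 2 \<in> x' then direct 2 else crossed 2)
        \<and> (if 3 \<in> x' then direct 3 else crossed 3))"
      by simp
    also have "\<dots> = of_bool ((a2, b2, c2) = sel3 ({1,2,3} - x') (a3, b3, c3) (a1, b1, c1) \<and>
                (a4, b4, c4) = sel3 ({1,2,3} - x') (a1, b1, c1) (a3, b3, c3))"
      by (rule arg_cong[where f = of_bool]) (auto simp: direct_def crossed_def)
    finally show "(\<Prod>t\<in>x'. of_bool (direct t)) * (\<Prod>t\<in>{1,2,3} - x'. of_bool (crossed t)) = \<dots>" .
  qed
  finally show ?thesis .
qed

definition product_state :: "(complex^'a) \<times> (complex^'b) \<times> (complex^'c) \<Rightarrow> 'a \<times> 'b \<times> 'c \<Rightarrow> complex" where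
  "product_state p m = fst p $ fst m * fst (snd p) $ fst (snd m) * snd (snd p) $ snd (snd m)"

lemma apply_prod_eq_sum:
  "apply_prod U \<psi>1 \<psi>2 \<psi>3 = (\<lambda>x. \<Sum>m\<in>UNIV. U $ x $ m * product_state (\<psi>1, \<psi>2, \<psi>3) m)"
  by (simp add: apply_prod_def matrix_vector_mult_def product_state_def)

lemma quartic_product_state:
  "quartic (product_state p) (a1, b1, c1) (a2, b2, c2) (a3, b3, c3) (a4, b4, c4) =
    quartic (vec_nth (fst p)) a1 a2 a3 a4 *
    (quartic (vec_nth (fst (snd p))) b1 b2 b3 b4 * quartic (vec_nth (snd (snd p))) c1 c2 c3 c4)"
  by (simp add: quartic_def product_state_def mult_ac)

lemma continuous_quartic_product_state:
  "continuous_on UNIV (\<lambda>p. quartic (product_state p) m1 m2 m3 m4)"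
  unfolding quartic_def product_state_def by (intro continuous_intros)

lemma purity_apply_prod:
  "(\<lambda>(\<psi>1, \<psi>2, \<psi>3). purity (sel3 K) (apply_prod U \<psi>1 \<psi>2 \<psi>3)) =
    (\<lambda>p. \<Sum>x\<in>UNIV. \<Sum>y\<in>UNIV. \<Sum>m1\<in>UNIV. \<Sum>m3\<in>UNIV. \<Sum>m2\<in>UNIV. \<Sum>m4\<in>UNIV.
       U $ x $ m1 * cnj (U $ sel3 K y x $ m2) * U $ y $ m3 * cnj (U $ sel3 K x y $ m4) *
       quartic (product_state p) m1 m2 m3 m4)"
proof -
  interpret coordinate_selection "sel3 K :: 'a::finite \<times> 'b::finite \<times> 'c::finite \<Rightarrow> _"
    by (rule coordinate_selection_sel3)
  show ?thesis
    by (auto simp: purity_eq_sum apply_prod_eq_sum quartic_linear_image)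
qed

lemma tau_apply_prod:
  "(\<lambda>(\<psi>1, \<psi>2, \<psi>3). tau g (apply_prod U \<psi>1 \<psi>2 \<psi>3)) =
    (\<lambda>p. 2 * (1 - Re ((\<lambda>(\<psi>1, \<psi>2, \<psi>3). purity (sel3 ({1,2,3} - g)) (apply_prod U \<psi>1 \<psi>2 \<psi>3)) p)))"
  by (auto simp: tau_def)

lemma square_prod_div_eq_prod_ratios:
  fixes a b c :: nat
  assumes "a > 0" "b > 0" "c > 0"
  shows "real ((a * b * c)\<^sup>2) / (real a * (real a + 1) * (real b * (real b + 1)) * (real c * (real c + 1))) =
    real a / (real a + 1) * (real b / (real b + 1)) * (real c / (real c + 1))"
proof -
  have "real a + 1 \<noteq> 0" "real b + 1 \<noteq> 0" "real c + 1 \<noteq> 0"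
    by linarith+
  with assms show ?thesis
    by (simp add: frac_eq_eq power2_eq_square)
qed

context
  fixes M1 :: "(complex^'a::finite) measure" and M2 :: "(complex^'b::finite) measure"
    and M3 :: "(complex^'c::finite) measure"
  assumes M1: "unitarily_invariant_state_measure M1"
    and M2: "unitarily_invariant_state_measure M2"
    and M3: "unitarily_invariant_state_measure M3"
begin

lemma prob_on_compact_product_states:
  "prob_on_compact (M1 \<Otimes>\<^sub>M (M2 \<Otimes>\<^sub>M M3)) (sphere 0 1 \<times> (sphere 0 1 \<times> sphere 0 1))"
  by (intro prob_on_compact_pair prob_on_compact_sphere M1 M2 M3)

lemma integrable_quartic_product_state:
  "integrable (M1 \<Otimes>\<^sub>M (M2 \<Otimes>\<^sub>M M3)) (\<lambda>p. quartic (product_state p) m1 m2 m3 m4)"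
  by (rule prob_on_compact_integrable[OF prob_on_compact_product_states continuous_quartic_product_state])

lemma integral_quartic_product_state:
  "(\<integral>p. quartic (product_state p) m1 m2 m3 m4 \<partial>(M1 \<Otimes>\<^sub>M (M2 \<Otimes>\<^sub>M M3))) =
    (\<Sum>x'\<in>Pow {1,2,3}. of_bool (m2 = sel3 ({1,2,3} - x') m3 m1 \<and> m4 = sel3 ({1,2,3} - x') m1 m3)) /
    (of_nat CARD('a) * (of_nat CARD('a) + 1) * (of_nat CARD('b) * (of_nat CARD('b) + 1))
      * (of_nat CARD('c) * (of_nat CARD('c) + 1)))"
proof -
  obtain a1 b1 c1 a2 b2 c2 a3 b3 c3 a4 b4 c4 where
    m: "m1 = (a1, b1, c1)" "m2 = (a2, b2, c2)" "m3 = (a3, b3, c3)" "m4 = (a4, b4, c4)"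
    by (metis prod.exhaust)
  have "(\<integral>q. quartic (vec_nth (fst q)) b1 b2 b3 b4 * quartic (vec_nth (snd q)) c1 c2 c3 c4 \<partial>(M2 \<Otimes>\<^sub>M M3))
      = fourth_moment M2 b1 b2 b3 b4 * fourth_moment M3 c1 c2 c3 c4"
    unfolding fourth_moment_def
    by (rule prob_on_compact_integral_mult[OF prob_on_compact_sphere[OF M2] prob_on_compact_sphere[OF M3]
          continuous_quartic continuous_quartic])
  moreover have "(\<integral>p. quartic (product_state p) m1 m2 m3 m4 \<partial>(M1 \<Otimes>\<^sub>M (M2 \<Otimes>\<^sub>M M3))) =
      fourth_moment M1 a1 a2 a3 a4 *
      (\<integral>q. quartic (vec_nth (fst q)) b1 b2 b3 b4 * quartic (vec_nth (snd q)) c1 c2 c3 c4 \<partial>(M2 \<Otimes>\<^sub>M M3))"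
    unfolding fourth_moment_def m quartic_product_state
    by (rule prob_on_compact_integral_mult[OF prob_on_compact_sphere[OF M1]
          prob_on_compact_pair[OF prob_on_compact_sphere[OF M2] prob_on_compact_sphere[OF M3]]
          continuous_quartic])
      (unfold quartic_def, intro continuous_intros)
  ultimately have "(\<integral>p. quartic (product_state p) m1 m2 m3 m4 \<partial>(M1 \<Otimes>\<^sub>M (M2 \<Otimes>\<^sub>M M3))) =
      fourth_moment M1 a1 a2 a3 a4 * (fourth_moment M2 b1 b2 b3 b4 * fourth_moment M3 c1 c2 c3 c4)"
    by simp
  also have "\<dots> = pairing a1 a2 a3 a4 * pairing b1 b2 b3 b4 * pairing c1 c2 c3 c4 /
    (of_nat CARD('a) * (of_nat CARD('a) + 1) * (of_nat CARD('b) * (of_nat CARD('b) + 1))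
      * (of_nat CARD('c) * (of_nat CARD('c) + 1)))"
    by (simp add: fourth_moment_eq M1 M2 M3 mult.assoc)
  finally show ?thesis
    by (simp add: m pairing_product)
qed

lemma integrable_purity_apply_prod:
  "integrable (M1 \<Otimes>\<^sub>M (M2 \<Otimes>\<^sub>M M3)) (\<lambda>(\<psi>1, \<psi>2, \<psi>3). purity (sel3 K) (apply_prod U \<psi>1 \<psi>2 \<psi>3))"
  unfolding purity_apply_prod
  by (simp add: integrable_sum integrable_quartic_product_state)

lemma integral_purity_apply_prod:
  "(\<integral>(\<psi>1, \<psi>2, \<psi>3). purity (sel3 K) (apply_prod U \<psi>1 \<psi>2 \<psi>3) \<partial>(M1 \<Otimes>\<^sub>M (M2 \<Otimes>\<^sub>M M3))) =
    (\<Sum>x'\<in>Pow {1,2,3}. purity (sel6 K ({1,2,3} - x')) (\<lambda>(x, m). U $ x $ m)) /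
    (of_nat CARD('a) * (of_nat CARD('a) + 1) * (of_nat CARD('b) * (of_nat CARD('b) + 1))
      * (of_nat CARD('c) * (of_nat CARD('c) + 1)))"
proof -
  have "(\<integral>(\<psi>1, \<psi>2, \<psi>3). purity (sel3 K) (apply_prod U \<psi>1 \<psi>2 \<psi>3) \<partial>(M1 \<Otimes>\<^sub>M (M2 \<Otimes>\<^sub>M M3))) =
    (\<Sum>x\<in>UNIV. \<Sum>y\<in>UNIV. \<Sum>m1\<in>UNIV. \<Sum>m3\<in>UNIV. \<Sum>m2\<in>UNIV. \<Sum>m4\<in>UNIV.
       U $ x $ m1 * cnj (U $ sel3 K y x $ m2) * U $ y $ m3 * cnj (U $ sel3 K x y $ m4) *
       (\<Sum>x'\<in>Pow {1,2,3}. of_bool (m2 = sel3 ({1,2,3} - x') m3 m1 \<and> m4 = sel3 ({1,2,3} - x') m1 m3))) /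
    (of_nat CARD('a) * (of_nat CARD('a) + 1) * (of_nat CARD('b) * (of_nat CARD('b) + 1))
      * (of_nat CARD('c) * (of_nat CARD('c) + 1)))"
    unfolding purity_apply_prod
    by (simp add: integrable_quartic_product_state integrable_sum integral_quartic_product_state
        sum_divide_distrib del: integral_mult_right integral_mult_right_zero)
  also have "\<dots> = (\<Sum>x\<in>UNIV. \<Sum>y\<in>UNIV. \<Sum>m1\<in>UNIV. \<Sum>m3\<in>UNIV. \<Sum>x'\<in>Pow {1,2,3}.
       U $ x $ m1 * cnj (U $ sel3 K y x $ sel3 ({1,2,3} - x') m3 m1) * U $ y $ m3 *
       cnj (U $ sel3 K x y $ sel3 ({1,2,3} - x') m1 m3)) /
    (of_nat CARD('a) * (of_nat CARD('a) + 1) * (of_nat CARD('b) * (of_nat CARD('b) + 1))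
      * (of_nat CARD('c) * (of_nat CARD('c) + 1)))"
    by (simp only: sum_of_bool_pairs_collapse finite_Pow_iff finite.emptyI finite_insert)
  also have "\<dots> = (\<Sum>x'\<in>Pow {1,2,3}. purity (sel6 K ({1,2,3} - x')) (\<lambda>(x, m). U $ x $ m)) /
    (of_nat CARD('a) * (of_nat CARD('a) + 1) * (of_nat CARD('b) * (of_nat CARD('b) + 1))
      * (of_nat CARD('c) * (of_nat CARD('c) + 1)))"
    unfolding purity_sel6_matrix by (simp only: sum.swap[of _ "Pow {1,2,3}"])
  finally show ?thesis .
qed

lemma integrable_tau_apply_prod:
  "integrable (M1 \<Otimes>\<^sub>M (M2 \<Otimes>\<^sub>M M3)) (\<lambda>(\<psi>1, \<psi>2, \<psi>3). tau g (apply_prod U \<psi>1 \<psi>2 \<psi>3))"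
proof -
  interpret prob_space "M1 \<Otimes>\<^sub>M (M2 \<Otimes>\<^sub>M M3)"
    using prob_on_compact_product_states by (simp add: prob_on_compact_def)
  show ?thesis
    using integrable_purity_apply_prod[of "{1,2,3} - g" U] by (simp add: tau_apply_prod)
qed

lemma ent_power_eq_integral_purity:
  "ent_power M1 M2 M3 g U =
    2 * (1 - Re (\<integral>(\<psi>1, \<psi>2, \<psi>3). purity (sel3 ({1,2,3} - g)) (apply_prod U \<psi>1 \<psi>2 \<psi>3)
                 \<partial>(M1 \<Otimes>\<^sub>M (M2 \<Otimes>\<^sub>M M3))))"
proof -
  interpret prob_space "M1 \<Otimes>\<^sub>M (M2 \<Otimes>\<^sub>M M3)"
    using prob_on_compact_product_states by (simp add: prob_on_compact_def)
  show ?thesis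
    using integrable_purity_apply_prod[of "{1,2,3} - g" U]
    by (simp add: ent_power_def tau_apply_prod prob_space)
qed

lemma ent_power1_eq_mean:
  "ent_power1 M1 M2 M3 U =
    (ent_power M1 M2 M3 {1,2} U + ent_power M1 M2 M3 {1,3} U + ent_power M1 M2 M3 {2,3} U) / 3"
proof -
  have "(\<lambda>(\<psi>1, \<psi>2, \<psi>3). one_tangle (apply_prod U \<psi>1 \<psi>2 \<psi>3)) =
      (\<lambda>p. ((\<lambda>(\<psi>1, \<psi>2, \<psi>3). tau {1,2} (apply_prod U \<psi>1 \<psi>2 \<psi>3)) p
          + (\<lambda>(\<psi>1, \<psi>2, \<psi>3). tau {1,3} (apply_prod U \<psi>1 \<psi>2 \<psi>3)) p
          + (\<lambda>(\<psi>1, \<psi>2, \<psi>3). tau {2,3} (apply_prod U \<psi>1 \<psi>2 \<psi>3)) p) / 3)"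
    by (auto simp: one_tangle_def)
  then show ?thesis
    by (simp add: ent_power1_def ent_power_def integrable_tau_apply_prod)
qed

lemma ent_power_eq_choi_purity:
  "ent_power M1 M2 M3 g U =
    2 * (1 - (real CARD('a) / (real CARD('a) + 1)) * (real CARD('b) / (real CARD('b) + 1))
               * (real CARD('c) / (real CARD('c) + 1))
             * (\<Sum>x' \<in> Pow {1,2,3}. Re (purity (sel6 ({1,2,3} - g) ({1,2,3} - x')) (choi_state U))))"
proof -
  have "(\<integral>(\<psi>1, \<psi>2, \<psi>3). purity (sel3 ({1,2,3} - g)) (apply_prod U \<psi>1 \<psi>2 \<psi>3) \<partial>(M1 \<Otimes>\<^sub>M (M2 \<Otimes>\<^sub>M M3)))
      = of_nat ((CARD('a) * CARD('b) * CARD('c))\<^sup>2) /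
        (of_nat CARD('a) * (of_nat CARD('a) + 1) * (of_nat CARD('b) * (of_nat CARD('b) + 1))
          * (of_nat CARD('c) * (of_nat CARD('c) + 1))) *
        (\<Sum>x'\<in>Pow {1,2,3}. purity (sel6 ({1,2,3} - g) ({1,2,3} - x')) (choi_state U))"
    by (simp add: integral_purity_apply_prod purity_choi_state sum_distrib_left sum_divide_distrib)
  also have "\<dots> = complex_of_real ((real CARD('a) / (real CARD('a) + 1)) * (real CARD('b) / (real CARD('b) + 1))
               * (real CARD('c) / (real CARD('c) + 1))) *
        (\<Sum>x'\<in>Pow {1,2,3}. purity (sel6 ({1,2,3} - g) ({1,2,3} - x')) (choi_state U))"
  proof -
    have "complex_of_real (real ((CARD('a) * CARD('b) * CARD('c))\<^sup>2) /
        (real CARD('a) * (real CARD('a) + 1) * (real CARD('b) * (real CARD('b) + 1))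
          * (real CARD('c) * (real CARD('c) + 1)))) =
      complex_of_real ((real CARD('a) / (real CARD('a) + 1)) * (real CARD('b) / (real CARD('b) + 1))
               * (real CARD('c) / (real CARD('c) + 1)))"
      by (simp only: square_prod_div_eq_prod_ratios finite_UNIV_card_ge_0 finite)
    then show ?thesis
      by simp
  qed
  finally show ?thesis
    by (simp add: ent_power_eq_integral_purity Re_sum)
qed

end



theorem theorem1:
  fixes U :: "complex^('a::finite \<times> 'b::finite \<times> 'c::finite)^('a \<times> 'b \<times> 'c)"
    and M1 :: "(complex^'a) measure" and M2 :: "(complex^'b) measure"
    and M3 :: "(complex^'c) measure"
  assumes "special_unitary U"
    and "unitarily_invariant_state_measure M1"
    and "unitarily_invariant_state_measure M2"
    and "unitarily_invariant_state_measure M3"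
  shows "ent_power1 M1 M2 M3 U =
           (ent_power M1 M2 M3 {1,2} U + ent_power M1 M2 M3 {1,3} U
             + ent_power M1 M2 M3 {2,3} U) / 3
         \<and> (\<forall>g \<in> {{1,2}, {1,3}, {2,3}}.
              ent_power M1 M2 M3 g U =
                2 * (1 - (real CARD('a) / (real CARD('a) + 1)) * (real CARD('b) / (real CARD('b) + 1))
                           * (real CARD('c) / (real CARD('c) + 1))
                         * (\<Sum>x' \<in> Pow {1,2,3}.
                              Re (purity (sel6 ({1,2,3} - g) ({1,2,3} - x')) (choi_state U)))))"
  using ent_power1_eq_mean[OF assms(2-4)] ent_power_eq_choi_purity[OF assms(2-4)] by blast

end
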